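(* Let $(x,y,\beta)$ be finitely valued random variables with $x,y\in\{0,1\}$ and arbitrary joint distribution. Alice receives $x$; Bob receives $y$ and the additional variable $\beta$, which may be correlated with both $x$ and $y$. Suppose Alice outputs $a=f(x,\lambda_A)$ and Bob outputs $b=g(y,\beta,\lambda_B)$, where $\lambda_A,\lambda_B$ are local random variables such that $\lambda_A$, $\lambda_B$ and $(x,y,\beta)$ are mutually independent; the parties have no other resources. If the PR-correlations $a\oplus b=xy$ hold with probability one, then for every value $\beta_0$ with $P(\beta=\beta_0)>0$ there exists a pair $(x_0,y_0)\in\{0,1\}^2$ with $P(x=x_0,y=y_0\mid\beta=\beta_0)=0$. *)

theory Defs
  imports "HOL-Probability.Probability"
begin

text \<open>Mutual independence of three random variables with (possibly) different
  codomain types, written out exactly as HOL-Probability's indep_vars unfolds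
  (measurability plus independence of the generated sigma-algebras).\<close>
definition indep3 ::
  "'w measure \<Rightarrow> 'a measure \<Rightarrow> ('w \<Rightarrow> 'a) \<Rightarrow> 'b measure \<Rightarrow> ('w \<Rightarrow> 'b)
     \<Rightarrow> 'c measure \<Rightarrow> ('w \<Rightarrow> 'c) \<Rightarrow> bool" where
  "indep3 M M1 X1 M2 X2 M3 X3 \<longleftrightarrow>
     X1 \<in> measurable M M1 \<and> X2 \<in> measurable M M2 \<and> X3 \<in> measurable M M3 \<and>
     prob_space.indep_sets M
       (\<lambda>i::nat. if i = 0 then {X1 -` A \<inter> space M | A. A \<in> sets M1}
                else if i = 1 then {X2 -` A \<inter> space M | A. A \<in> sets M2}
                else {X3 -` A \<inter> space M | A. A \<in> sets M3})
       {0, 1, 2}"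

end

theory Submission
  imports Defs
begin

text \<open>Condition on \<open>\<beta> = \<beta>\<^sub>0\<close> and suppose every input pair \<open>(x, y)\<close> still has positive
  probability. For each input choose an output value that Alice (resp. Bob, who now holds the
  fixed \<open>\<beta>\<^sub>0\<close>) produces with positive probability. By independence the event that both
  parties produce these values on input \<open>(x, y)\<close> with \<open>\<beta> = \<beta>\<^sub>0\<close> has positive probability,
  so the almost sure PR-correlation holds for the chosen values on all four input pairs.
  This would be a deterministic local strategy winning the CHSH game with certainty,
  which does not exist.\<close>

lemma no_deterministic_PR_box:
  fixes p q :: "bool \<Rightarrow> bool"
  shows "\<exists>x y. (p x \<noteq> q y) \<noteq> (x \<and> y)"
proof (rule ccontr)
  assume "\<not> ?thesis"
  then have PR: "(p x \<noteq> q y) = (x \<and> y)" for x y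
    by blast
  from PR[of False False] PR[of False True] PR[of True False] PR[of True True]
  show False
    by simp
qed

lemma (in prob_space) ex_bool_value_pos_prob:
  assumes "{w \<in> space M. P w} \<in> events"
  shows "\<exists>b. \<P>(w in M. P w = b) > 0"
proof (rule ccontr)
  assume "\<not> ?thesis"
  then have "\<P>(w in M. P w = b) = 0" for b
    using measure_nonneg[of M "{w \<in> space M. P w = b}"] by (meson leI order.antisym)
  from this[of True] this[of False] prob_neg[OF assms] show False
    by simp
qed

lemma (in prob_space) ex_bool_choice_pos_prob:
  assumes "\<And>x. {w \<in> space M. P x w} \<in> events"
  shows "\<exists>a. \<forall>x. \<P>(w in M. P x w = a x) > 0"
  using ex_bool_value_pos_prob[OF assms] by (rule choice[OF allI])

lemma cond_prob_neq_0_imp_pos: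
  assumes "\<P>(w in M. P w \<bar> Q w) \<noteq> 0"
  shows "\<P>(w in M. P w \<and> Q w) > 0"
  using assms measure_nonneg[of M "{w \<in> space M. P w \<and> Q w}"] by (auto simp: cond_prob_def less_le)

lemma (in prob_space) AE_ex_in_pos_prob:
  assumes "AE w in M. P w" and "\<P>(w in M. Q w) > 0"
  shows "\<exists>w\<in>space M. P w \<and> Q w"
proof (rule ccontr)
  assume none: "\<not> ?thesis"
  have "AE w in M. \<not> Q w"
    using assms(1) by (rule AE_mp) (use none in auto)
  with assms(2) show False
    by (simp add: prob_eq_0_AE)
qed

lemma indep3_prob_pred:
  assumes "prob_space M" and "indep3 M M1 X1 M2 X2 M3 X3"
    and "P1 \<in> measurable M1 (count_space UNIV)" and "P2 \<in> measurable M2 (count_space UNIV)"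
    and "P3 \<in> measurable M3 (count_space UNIV)"
  shows "\<P>(w in M. P1 (X1 w) \<and> P2 (X2 w) \<and> P3 (X3 w)) =
           \<P>(w in M. P1 (X1 w)) * \<P>(w in M. P2 (X2 w)) * \<P>(w in M. P3 (X3 w))"
proof -
  interpret prob_space M by fact
  note indep = assms(2)[unfolded indep3_def]
  have preimage: "\<exists>S. {w \<in> space M. P (X w)} = X -` S \<inter> space M \<and> S \<in> sets N"
    if "X \<in> measurable M N" "P \<in> measurable N (count_space UNIV)" for X N P
  proof (intro exI conjI)
    show "{w \<in> space M. P (X w)} = X -` {v \<in> space N. P v} \<inter> space M"
      using measurable_space[OF that(1)] by auto
  qed (use that(2) in \<open>rule predE\<close>)
  define A where "A i = (if i = (0::nat) then {w \<in> space M. P1 (X1 w)}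
    else if i = 1 then {w \<in> space M. P2 (X2 w)} else {w \<in> space M. P3 (X3 w)})" for i
  have "prob (\<Inter>i\<in>{0,1,2}. A i) = (\<Prod>i\<in>{0,1,2}. prob (A i))"
  proof (rule indep_setsD[OF conjunct2[OF conjunct2[OF conjunct2[OF indep]]]])
    show "\<forall>i\<in>{0,1,2}. A i \<in> (if i = 0 then {X1 -` S \<inter> space M |S. S \<in> sets M1}
        else if i = 1 then {X2 -` S \<inter> space M |S. S \<in> sets M2}
        else {X3 -` S \<inter> space M |S. S \<in> sets M3})"
      using indep assms(3-5) by (auto simp: A_def intro!: preimage)
  qed auto
  moreover have "(\<Inter>i\<in>{0,1,2}. A i) = {w \<in> space M. P1 (X1 w) \<and> P2 (X2 w) \<and> P3 (X3 w)}"
    by (auto simp: A_def)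
  ultimately show ?thesis
    by (simp add: A_def mult.assoc)
qed

lemma indep3_AE_ex_joint_outcome:
  assumes "prob_space M" and "indep3 M M1 X1 M2 X2 M3 X3"
    and "P1 \<in> measurable M1 (count_space UNIV)" and "P2 \<in> measurable M2 (count_space UNIV)"
    and "P3 \<in> measurable M3 (count_space UNIV)"
    and "AE w in M. R w"
    and "\<P>(w in M. P1 (X1 w)) > 0" and "\<P>(w in M. P2 (X2 w)) > 0" and "\<P>(w in M. P3 (X3 w)) > 0"
  shows "\<exists>w\<in>space M. R w \<and> P1 (X1 w) \<and> P2 (X2 w) \<and> P3 (X3 w)"
proof -
  interpret prob_space M by fact
  have "\<P>(w in M. P1 (X1 w) \<and> P2 (X2 w) \<and> P3 (X3 w)) > 0"
    using assms(7-9) by (simp add: indep3_prob_pred[OF assms(1-5)])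
  with assms(6) show ?thesis
    by (rule AE_ex_in_pos_prob)
qed

theorem lemma3:
  fixes M :: "'w measure"
    and X Y :: "'w \<Rightarrow> bool"
    and B :: "'w \<Rightarrow> 'b"
    and MA :: "'la measure" and LA :: "'w \<Rightarrow> 'la"
    and MB :: "'lb measure" and LB :: "'w \<Rightarrow> 'lb"
    and f :: "bool \<Rightarrow> 'la \<Rightarrow> bool"
    and g :: "bool \<Rightarrow> 'b \<Rightarrow> 'lb \<Rightarrow> bool"
  assumes "prob_space M"
    and "X \<in> measurable M (count_space UNIV)"
    and "Y \<in> measurable M (count_space UNIV)"
    and "B \<in> measurable M (count_space UNIV)"
    and "finite (B ` space M)"
    and "indep3 M MA LA MB LB (count_space UNIV) (\<lambda>w. (X w, Y w, B w))"
    and "\<And>x. f x \<in> measurable MA (count_space UNIV)"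
    and "\<And>y b. g y b \<in> measurable MB (count_space UNIV)"
    and "AE w in M. (f (X w) (LA w) \<noteq> g (Y w) (B w) (LB w)) = (X w \<and> Y w)"
  shows "\<forall>\<beta>0. \<P>(w in M. B w = \<beta>0) > 0 \<longrightarrow>
           (\<exists>x0 y0. \<P>(w in M. X w = x0 \<and> Y w = y0 \<bar> B w = \<beta>0) = 0)"
proof (intro allI impI)
  fix \<beta>0 assume "\<P>(w in M. B w = \<beta>0) > 0"
  interpret prob_space M by fact
  have LA: "LA \<in> measurable M MA" and LB: "LB \<in> measurable M MB"
    using assms(6) by (auto simp: indep3_def)
  obtain a where a: "\<forall>x. \<P>(w in M. f x (LA w) = a x) > 0"
    using ex_bool_choice_pos_prob[of "\<lambda>x w. f x (LA w)", OF predE[OF measurable_compose[OF LA assms(7)]]]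
    by blast
  obtain b where b: "\<forall>y. \<P>(w in M. g y \<beta>0 (LB w) = b y) > 0"
    using ex_bool_choice_pos_prob[of "\<lambda>y w. g y \<beta>0 (LB w)", OF predE[OF measurable_compose[OF LB assms(8)]]]
    by blast
  show "\<exists>x0 y0. \<P>(w in M. X w = x0 \<and> Y w = y0 \<bar> B w = \<beta>0) = 0"
  proof (rule ccontr)
    assume "\<not> ?thesis"
    then have input: "\<P>(w in M. (X w = x \<and> Y w = y) \<and> B w = \<beta>0) > 0" for x y
      by (intro cond_prob_neq_0_imp_pos) blast
    have PR: "(a x \<noteq> b y) = (x \<and> y)" for x y
    proof -
      have "\<exists>w\<in>space M. (f (X w) (LA w) \<noteq> g (Y w) (B w) (LB w)) = (X w \<and> Y w) \<and>
          f x (LA w) = a x \<and> g y \<beta>0 (LB w) = b y \<and> (X w = x \<and> Y w = y) \<and> B w = \<beta>0"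
        using indep3_AE_ex_joint_outcome[OF assms(1,6) _ _ _ assms(9), of "\<lambda>l. f x l = a x"
            "\<lambda>l. g y \<beta>0 l = b y" "\<lambda>(x', y', \<beta>). (x' = x \<and> y' = y) \<and> \<beta> = \<beta>0"]
          assms(7,8) a b input
        by (simp add: measurable_compose[OF _ measurable_const])
      then show ?thesis
        by auto
    qed
    obtain x y where "(a x \<noteq> b y) \<noteq> (x \<and> y)"
      using no_deterministic_PR_box by blast
    from this PR[of x y] show False
      by (rule notE)
  qed
qed

end
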